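(* Let $(\mathcal{G},\mu)$ be an edge partition, $B\subseteq\mathcal{N}$, $\zeta\in\Theta_\mathcal{G}(B)$, $e\in\zeta\cap\mathcal{E}^-$ and $e'\in\mu(e)$. Then $(\zeta\setminus\{e\})\cup\{e'\}\in\Theta_\mathcal{G}(B)$.
   Context: $R$ is a partially ordered ring; $\mathcal{G}=(\mathcal{N},\mathcal{E})$ is a multidigraph with source/target maps $s,t\colon\mathcal{E}\to\mathcal{N}$, no self-loops, $\mathcal{N}=\{1,\dots,m+1\}$, labeling $\pi\colon\mathcal{E}\to R$. Trees/forests are subgraphs whose underlying undirected graph is acyclic (connected for trees); a tree is rooted at $N$ if $N$ is its only node without outgoing edges; spanning forests have node set $\mathcal{N}$ and are identified with their edge sets. $\Theta_\mathcal{G}(B)$ is the set of spanning forests with $|B|$ connected components, each a tree rooted at a node of $B$. A cycle is a closed directed path with no repeated nodes. $\mathcal{E}^-=\{e:\pi(e)\in R_{<0}\}$, $\mathcal{E}^+=\{e:\pi(e)\in R_{>0}\}$. A pair $(\mathcal{G},\mu)$ with $\mu\colon\mathcal{E}^-\to\mathcal{P}(\mathcal{E}^+)$ is an edge partition if (i) $\mathcal{E}=\mathcal{E}^+\sqcup\mathcal{E}^-$; (ii) every cycle contains at most one edge of $\mathcal{E}^-$; (iii) for each $e\in\mathcal{E}^-$: (a) $e'\in\mu(e)\Rightarrow s(e')=s(e)$; (b) $e'\in\mu(e)\Rightarrow$ every cycle containing $e'$ contains $t(e)$; (c) $\mu(e)\cap\mu(e')=\emptyset$ for $e\neq e'$.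 *)

theory Defs
  imports Main
begin

definition multidigraph :: "nat \<Rightarrow> 'e set \<Rightarrow> ('e \<Rightarrow> nat) \<Rightarrow> ('e \<Rightarrow> nat) \<Rightarrow> bool" where
  "multidigraph m E s t \<longleftrightarrow> finite E \<and>
     (\<forall>e\<in>E. s e \<in> {1..m+1} \<and> t e \<in> {1..m+1} \<and> s e \<noteq> t e)"

definition ucycle :: "('e \<Rightarrow> nat) \<Rightarrow> ('e \<Rightarrow> nat) \<Rightarrow> 'e set \<Rightarrow> 'e list \<Rightarrow> nat list \<Rightarrow> bool" where
  "ucycle s t F es vs \<longleftrightarrow> es \<noteq> [] \<and> length vs = length es \<and> distinct es \<and> distinct vs \<and>
     set es \<subseteq> F \<and>
     (\<forall>i<length es. (s (es!i) = vs!i \<and> t (es!i) = vs!((i+1) mod length es)) \<or>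
                    (t (es!i) = vs!i \<and> s (es!i) = vs!((i+1) mod length es)))"

definition uacyclic :: "('e \<Rightarrow> nat) \<Rightarrow> ('e \<Rightarrow> nat) \<Rightarrow> 'e set \<Rightarrow> bool" where
  "uacyclic s t F \<longleftrightarrow> (\<nexists>es vs. ucycle s t F es vs)"

definition uconn :: "nat set \<Rightarrow> ('e \<Rightarrow> nat) \<Rightarrow> ('e \<Rightarrow> nat) \<Rightarrow> 'e set \<Rightarrow> (nat \<times> nat) set" where
  "uconn N s t F = Restr ((({(s e, t e) | e. e \<in> F}) \<union> {(t e, s e) | e. e \<in> F})\<^sup>*) N"

definition components :: "nat set \<Rightarrow> ('e \<Rightarrow> nat) \<Rightarrow> ('e \<Rightarrow> nat) \<Rightarrow> 'e set \<Rightarrow> nat set set" where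
  "components N s t F = N // uconn N s t F"

text \<open>Theta_G(B): spanning forests (edge sets F \<subseteq> E, node set N) with |B| connected
  components, each a tree rooted at a node of B (its unique node without outgoing F-edges
  lies in B).\<close>
definition Theta :: "nat \<Rightarrow> 'e set \<Rightarrow> ('e \<Rightarrow> nat) \<Rightarrow> ('e \<Rightarrow> nat) \<Rightarrow> nat set \<Rightarrow> 'e set set" where
  "Theta m E s t B = {F. F \<subseteq> E \<and> uacyclic s t F \<and>
      card (components {1..m+1} s t F) = card B \<and>
      (\<forall>C\<in>components {1..m+1} s t F. \<exists>r\<in>B \<inter> C.
          \<forall>n\<in>C. (\<nexists>e. e \<in> F \<and> s e = n) \<longleftrightarrow> n = r)}"

definition dcycle :: "'e set \<Rightarrow> ('e \<Rightarrow> nat) \<Rightarrow> ('e \<Rightarrow> nat) \<Rightarrow> 'e list \<Rightarrow> bool" where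
  "dcycle E s t es \<longleftrightarrow> es \<noteq> [] \<and> set es \<subseteq> E \<and> distinct (map s es) \<and>
     (\<forall>i<length es. t (es!i) = s (es!((i+1) mod length es)))"

definition Eneg :: "'e set \<Rightarrow> ('e \<Rightarrow> 'r::ordered_ring) \<Rightarrow> 'e set" where
  "Eneg E \<pi> = {e\<in>E. \<pi> e < 0}"

definition Epos :: "'e set \<Rightarrow> ('e \<Rightarrow> 'r::ordered_ring) \<Rightarrow> 'e set" where
  "Epos E \<pi> = {e\<in>E. \<pi> e > 0}"

definition edge_partition ::
  "nat \<Rightarrow> 'e set \<Rightarrow> ('e \<Rightarrow> nat) \<Rightarrow> ('e \<Rightarrow> nat) \<Rightarrow> ('e \<Rightarrow> 'r::ordered_ring) \<Rightarrow> ('e \<Rightarrow> 'e set) \<Rightarrow> bool" where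
  "edge_partition m E s t \<pi> \<mu> \<longleftrightarrow>
     multidigraph m E s t \<and>
     E = Epos E \<pi> \<union> Eneg E \<pi> \<and> Epos E \<pi> \<inter> Eneg E \<pi> = {} \<and>
     (\<forall>es. dcycle E s t es \<longrightarrow> card (set es \<inter> Eneg E \<pi>) \<le> 1) \<and>
     (\<forall>e\<in>Eneg E \<pi>. \<mu> e \<subseteq> Epos E \<pi> \<and>
        (\<forall>e'\<in>\<mu> e. s e' = s e) \<and>
        (\<forall>e'\<in>\<mu> e. \<forall>es. dcycle E s t es \<and> e' \<in> set es \<longrightarrow> t e \<in> s ` set es) \<and>
        (\<forall>e''\<in>Eneg E \<pi>. e'' \<noteq> e \<longrightarrow> \<mu> e \<inter> \<mu> e'' = {}))"

end

theory Submission
  imports Defs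
begin

(* An edge set F lies in Theta(B) exactly when F \<subseteq> E, no two edges of F share a source, the
   sources of F are precisely the nodes outside B, and F has no trap, i.e. no nonempty node set
   S in which every node has an F-edge leading back into S (for finite F, the same as having no
   directed cycle). Exchanging e for e' \<in> \<mu>(e) preserves the first three conditions because
   s e' = s e. A trap of the new edge set contains a directed cycle; if that cycle uses e', then by
   condition (iii)(b) it also passes through t e, so its node set is a trap of \<zeta> as well, with e
   taking over the role of e'. *)

definition urel :: "('e \<Rightarrow> nat) \<Rightarrow> ('e \<Rightarrow> nat) \<Rightarrow> 'e set \<Rightarrow> (nat \<times> nat) set" where
  "urel s t F = {(s e, t e) | e. e \<in> F} \<union> {(t e, s e) | e. e \<in> F}"

lemma uconn_urel: "uconn N s t F = Restr ((urel s t F)\<^sup>*) N"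
  by (simp add: uconn_def urel_def)

lemma sym_urel: "sym (urel s t F)"
  unfolding urel_def sym_def by blast

lemma urel_mono: "F0 \<subseteq> F \<Longrightarrow> urel s t F0 \<subseteq> urel s t F"
  unfolding urel_def by blast

lemma equiv_uconn: "equiv N (uconn N s t F)"
proof (rule equivI)
  show "uconn N s t F \<subseteq> N \<times> N" "refl_on N (uconn N s t F)"
    unfolding uconn_urel refl_on_def by auto
  show "sym (uconn N s t F)"
    using sym_rtrancl[OF sym_urel] unfolding uconn_urel sym_def by blast
  show "trans (uconn N s t F)"
    unfolding uconn_urel by (rule trans_Restr) (rule trans_rtrancl)
qed

lemma uconn_sym: "(x, y) \<in> uconn N s t F \<Longrightarrow> (y, x) \<in> uconn N s t F"
  using equiv_uconn[of N s t F] unfolding equiv_def by (blast dest: symD)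

lemma uconn_trans:
  "(x, y) \<in> uconn N s t F \<Longrightarrow> (y, z) \<in> uconn N s t F \<Longrightarrow> (x, z) \<in> uconn N s t F"
  using equiv_uconn[of N s t F] unfolding equiv_def by (blast dest: transD)

lemma uconn_mono: "F0 \<subseteq> F \<Longrightarrow> uconn N s t F0 \<subseteq> uconn N s t F"
  unfolding uconn_urel by (intro Int_mono rtrancl_mono urel_mono order_refl)

lemma edge_in_uconn:
  assumes "f \<in> F" "s f \<in> N" "t f \<in> N"
  shows "(s f, t f) \<in> uconn N s t F"
  using assms unfolding uconn_urel urel_def by auto

definition uwalk :: "('e \<Rightarrow> nat) \<Rightarrow> ('e \<Rightarrow> nat) \<Rightarrow> 'e set \<Rightarrow> 'e list \<Rightarrow> nat list \<Rightarrow> bool" where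
  "uwalk s t F ps ws \<longleftrightarrow> length ws = Suc (length ps) \<and> set ps \<subseteq> F \<and>
    (\<forall>i<length ps. (s (ps!i) = ws!i \<and> t (ps!i) = ws!Suc i) \<or> (t (ps!i) = ws!i \<and> s (ps!i) = ws!Suc i))"

lemma rtrancl_urel_imp_simple_uwalk:
  assumes "(u, v) \<in> (urel s t F)\<^sup>*"
  shows "\<exists>ps ws. uwalk s t F ps ws \<and> distinct ws \<and> hd ws = u \<and> last ws = v"
  using assms
proof (induction rule: rtrancl_induct)
  case base
  have "uwalk s t F [] [u]" by (simp add: uwalk_def)
  then show ?case by fastforce
next
  case (step y z)
  then obtain ps ws where W: "uwalk s t F ps ws" "distinct ws" "hd ws = u" "last ws = y"
    by blast
  from step.hyps(2) obtain f where f: "f \<in> F" "(s f = y \<and> t f = z) \<or> (t f = y \<and> s f = z)"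
    unfolding urel_def by blast
  have len: "length ws = Suc (length ps)" using W(1) by (simp add: uwalk_def)
  show ?case
  proof (cases "z \<in> set ws")
    case True
    \<comment> \<open>cut the walk at the first visit of z\<close>
    then obtain i where i: "i < length ws" "ws!i = z" by (auto simp: in_set_conv_nth)
    have "uwalk s t F (take i ps) (take (Suc i) ws)"
      using W(1) i len unfolding uwalk_def by (auto simp: min_def dest: in_set_takeD)
    moreover have "last (take (Suc i) ws) = z"
      using i by (simp add: take_Suc_conv_app_nth)
    ultimately show ?thesis using W(2,3) by fastforce
  next
    case False
    have "ws \<noteq> []" using len by auto
    then have "ws ! length ps = y" using W(4) len by (simp add: last_conv_nth)
    then have "uwalk s t F (ps @ [f]) (ws @ [z])"
      using W(1) len f unfolding uwalk_def by (auto simp: nth_append less_Suc_eq)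
    then show ?thesis using W(2,3) False \<open>ws \<noteq> []\<close> by fastforce
  qed
qed

lemma uwalk_distinct_edges:
  assumes "uwalk s t F ps ws" "distinct ws"
  shows "distinct ps"
  unfolding distinct_conv_nth
proof (intro allI impI)
  fix i j assume ij: "i < length ps" "j < length ps" "i \<noteq> j"
  have len: "length ws = Suc (length ps)" using assms(1) by (simp add: uwalk_def)
  have ends: "{s (ps!k), t (ps!k)} = {ws!k, ws!Suc k}" if "k < length ps" for k
    using assms(1) that unfolding uwalk_def by auto
  have inj: "ws!a = ws!b \<longleftrightarrow> a = b" if "a < length ws" "b < length ws" for a b
    using assms(2) that by (simp add: nth_eq_iff_index_eq)
  show "ps!i \<noteq> ps!j"
  proof
    assume "ps!i = ps!j"
    then have "{ws!i, ws!Suc i} = {ws!j, ws!Suc j}" using ends ij by metis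
    then show False using inj ij len by (auto simp: doubleton_eq_iff)
  qed
qed

lemma uacyclic_edge_ends_disconnected:
  assumes "uacyclic s t F" "c \<in> F"
  shows "(t c, s c) \<notin> (urel s t (F - {c}))\<^sup>*"
proof
  assume "(t c, s c) \<in> (urel s t (F - {c}))\<^sup>*"
  then obtain ps ws where W: "uwalk s t (F - {c}) ps ws" "distinct ws" "hd ws = t c" "last ws = s c"
    using rtrancl_urel_imp_simple_uwalk by blast
  have len: "length ws = Suc (length ps)" and ps: "set ps \<subseteq> F - {c}"
    using W(1) unfolding uwalk_def by auto
  then have "ws \<noteq> []" by auto
  then have ws_ends: "ws ! 0 = t c" "ws ! length ps = s c"
    using W(3,4) len by (simp_all add: hd_conv_nth last_conv_nth)
  have "ucycle s t F (ps @ [c]) ws"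
    unfolding ucycle_def
  proof (intro conjI allI impI)
    show "distinct (ps @ [c])" using uwalk_distinct_edges[OF W(1,2)] ps by auto
    fix i assume "i < length (ps @ [c])"
    then consider "i < length ps" | "i = length ps" by fastforce
    then show "s ((ps @ [c]) ! i) = ws ! i \<and> t ((ps @ [c]) ! i) = ws ! ((i + 1) mod length (ps @ [c])) \<or>
        t ((ps @ [c]) ! i) = ws ! i \<and> s ((ps @ [c]) ! i) = ws ! ((i + 1) mod length (ps @ [c]))"
    proof cases
      case 1
      then show ?thesis using W(1) unfolding uwalk_def by (simp add: nth_append)
    qed (use ws_ends in simp)
  qed (use W(2) len ps assms(2) in auto)
  then show False using assms(1) unfolding uacyclic_def by blast
qed

definition trap :: "('e \<Rightarrow> nat) \<Rightarrow> ('e \<Rightarrow> nat) \<Rightarrow> 'e set \<Rightarrow> nat set \<Rightarrow> bool" where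
  "trap s t F S \<longleftrightarrow> S \<noteq> {} \<and> (\<forall>x\<in>S. \<exists>f\<in>F. s f = x \<and> t f \<in> S)"

definition trapfree :: "('e \<Rightarrow> nat) \<Rightarrow> ('e \<Rightarrow> nat) \<Rightarrow> 'e set \<Rightarrow> bool" where
  "trapfree s t F \<longleftrightarrow> (\<nexists>S. trap s t F S)"

lemma trap_mono: "F0 \<subseteq> F \<Longrightarrow> trap s t F0 S \<Longrightarrow> trap s t F S"
  unfolding trap_def by blast

lemma trapfree_subset: "F0 \<subseteq> F \<Longrightarrow> trapfree s t F \<Longrightarrow> trapfree s t F0"
  unfolding trapfree_def using trap_mono by blast

lemma dcycle_mono: "dcycle F s t es \<Longrightarrow> F \<subseteq> E \<Longrightarrow> dcycle E s t es"
  unfolding dcycle_def by blast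

lemma dcycle_target_in_sources:
  assumes "dcycle F s t es" "f \<in> set es"
  shows "t f \<in> s ` set es"
proof -
  obtain i where "i < length es" "f = es ! i" using assms(2) by (auto simp: in_set_conv_nth)
  then show ?thesis using assms(1) unfolding dcycle_def by force
qed

lemma dcycle_imp_ucycle: "dcycle F s t es \<Longrightarrow> ucycle s t F es (map s es)"
  unfolding dcycle_def ucycle_def by (auto simp: distinct_map)

lemma finite_range_first_repetition:
  fixes f :: "nat \<Rightarrow> 'a"
  assumes "finite (range f)"
  obtains i j where "i < j" "f i = f j" "\<And>a b. a < b \<Longrightarrow> b < j \<Longrightarrow> f a \<noteq> f b"
proof -
  have "\<not> inj f" using assms finite_imageD infinite_UNIV_nat by blast
  then have ex: "\<exists>j. \<exists>i<j. f i = f j" unfolding inj_def by (metis linorder_neqE_nat)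
  define j where "j = (LEAST j. \<exists>i<j. f i = f j)"
  obtain i where "i < j" "f i = f j" using LeastI_ex[OF ex] unfolding j_def[symmetric] by blast
  moreover have "f a \<noteq> f b" if "a < b" "b < j" for a b
    using not_less_Least[OF that(2)[unfolded j_def]] that(1) by blast
  ultimately show ?thesis using that by blast
qed

lemma trap_imp_dcycle:
  assumes "finite F" "trap s t F S"
  shows "\<exists>es. dcycle F s t es"
proof -
  obtain x0 where x0: "x0 \<in> S" using assms(2) unfolding trap_def by blast
  obtain g where g: "\<forall>x\<in>S. g x \<in> F \<and> s (g x) = x \<and> t (g x) \<in> S"
    using assms(2) unfolding trap_def by metis
  define sq where "sq k = ((\<lambda>x. t (g x)) ^^ k) x0" for k
  have sqS: "sq k \<in> S" for k
    by (induction k) (auto simp: sq_def x0 g)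
  have sq_Suc: "sq (Suc k) = t (g (sq k))" for k
    by (simp add: sq_def)
  have "range sq \<subseteq> insert x0 (t ` F)"
  proof
    fix y assume "y \<in> range sq"
    then obtain k where "y = sq k" by blast
    then show "y \<in> insert x0 (t ` F)"
      using g sqS by (cases k) (auto simp: sq_Suc, simp add: sq_def)
  qed
  then have "finite (range sq)" using assms(1) finite_subset by blast
  then obtain i j where i: "i < j" "sq i = sq j"
    and sq_inj: "\<And>a b. a < b \<Longrightarrow> b < j \<Longrightarrow> sq a \<noteq> sq b"
    by (rule finite_range_first_repetition) blast
  define es where "es = map (\<lambda>k. g (sq (i + k))) [0..<j - i]"
  have len: "length es = j - i" by (simp add: es_def)
  have s_es: "map s es = map (\<lambda>k. sq (i + k)) [0..<j - i]"
    unfolding es_def using g sqS by simp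
  have "distinct (map s es)"
    unfolding s_es distinct_map
  proof (rule conjI[OF _ inj_onI])
    fix a b assume "a \<in> set [0..<j - i]" "b \<in> set [0..<j - i]" "sq (i + a) = sq (i + b)"
    then show "a = b" using sq_inj[of "i + a" "i + b"] sq_inj[of "i + b" "i + a"]
      by (cases a b rule: linorder_cases) (simp_all add: less_diff_conv add.commute)
  qed simp
  moreover have "t (es!k) = s (es!((k + 1) mod length es))" if "k < length es" for k
  proof -
    have "t (es!k) = sq (Suc (i + k))" using that g sqS by (simp add: es_def sq_Suc)
    moreover have "Suc k < j - i \<or> Suc (i + k) = j" using that len by auto
    ultimately show ?thesis using that len g sqS i by (auto simp: es_def)
  qed
  moreover have "es \<noteq> []" "set es \<subseteq> F" using i g sqS by (auto simp: es_def)
  ultimately show ?thesis unfolding dcycle_def by blast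
qed

lemma uacyclic_imp_trapfree: "finite F \<Longrightarrow> uacyclic s t F \<Longrightarrow> trapfree s t F"
  unfolding trapfree_def uacyclic_def using trap_imp_dcycle dcycle_imp_ucycle by metis

lemma ucycle_ends:
  assumes "ucycle s t F es vs" "f \<in> set es"
  shows "s f \<in> set vs" "t f \<in> set vs"
proof -
  obtain i where i: "i < length es" "f = es ! i" using assms(2) by (auto simp: in_set_conv_nth)
  have "vs ! i \<in> set vs" "vs ! ((i + 1) mod length es) \<in> set vs"
    using assms(1) i(1) unfolding ucycle_def by auto
  then show "s f \<in> set vs" "t f \<in> set vs"
    using assms(1) i unfolding ucycle_def by auto
qed

text \<open>In a cycle whose edges have pairwise distinct sources, every node of the cycle is the
  source of one of its edges, so the nodes of the cycle form a trap.\<close>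
lemma inj_trapfree_imp_uacyclic:
  assumes inj: "inj_on s F" and "trapfree s t F"
  shows "uacyclic s t F"
  unfolding uacyclic_def
proof
  assume "\<exists>es vs. ucycle s t F es vs"
  then obtain es vs where C: "ucycle s t F es vs" by blast
  have es: "set es \<subseteq> F" "distinct es" "es \<noteq> []" and vs: "distinct vs" "length vs = length es"
    using C unfolding ucycle_def by auto
  have sub: "s ` set es \<subseteq> set vs" using ucycle_ends(1)[OF C] by blast
  have "card (s ` set es) = card (set vs)"
    using card_image[OF inj_on_subset[OF inj es(1)]] es(2) vs by (simp add: distinct_card)
  then have sources: "s ` set es = set vs" using card_subset_eq[OF finite_set sub] by simp
  have "trap s t F (set vs)"
    unfolding trap_def
  proof (intro conjI ballI)
    show "set vs \<noteq> {}" using es(3) vs(2) by auto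
    fix x assume "x \<in> set vs"
    then obtain f where "f \<in> set es" "s f = x" unfolding sources[symmetric] by blast
    then show "\<exists>f\<in>F. s f = x \<and> t f \<in> set vs" using es(1) ucycle_ends(2)[OF C] by blast
  qed
  then show False using assms(2) unfolding trapfree_def by blast
qed

lemma trapfree_reaches_root:
  assumes ends: "\<forall>f\<in>F. s f \<in> N \<and> t f \<in> N" and src: "N - B \<subseteq> s ` F"
    and "trapfree s t F" and "n \<in> N"
  shows "\<exists>b\<in>B. (n, b) \<in> uconn N s t F"
proof (rule ccontr)
  let ?R = "uconn N s t F"
  assume no_root: "\<not> (\<exists>b\<in>B. (n, b) \<in> ?R)"
  have refl: "refl_on N ?R" and trans: "trans ?R"
    using equiv_uconn[of N s t F] by (simp_all add: equiv_def)
  define S where "S = {x\<in>N. \<forall>b\<in>B. (x, b) \<notin> ?R}"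
  have "trap s t F S"
    unfolding trap_def
  proof (intro conjI ballI)
    show "S \<noteq> {}" using no_root \<open>n \<in> N\<close> by (auto simp: S_def)
    fix x assume x: "x \<in> S"
    then have "x \<in> N - B" using refl_onD[OF refl] by (auto simp: S_def)
    then obtain f where f: "f \<in> F" "s f = x" using src by blast
    have "(s f, t f) \<in> ?R" using ends f(1) by (intro edge_in_uconn) auto
    then have "(t f, b) \<notin> ?R" if "b \<in> B" for b
      using x that transD[OF trans] f(2) unfolding S_def by blast
    then have "t f \<in> S" using ends f(1) unfolding S_def by blast
    then show "\<exists>f\<in>F. s f = x \<and> t f \<in> S" using f by blast
  qed
  then show False using assms(3) unfolding trapfree_def by blast
qed

text \<open>A simple path between two distinct roots would need more edge sources than it has
  inner nodes.\<close>
lemma connected_roots_eq: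
  assumes inj: "inj_on s F" and src: "s ` F \<inter> B = {}"
    and b: "b1 \<in> B" "b2 \<in> B" and conn: "(b1, b2) \<in> uconn N s t F"
  shows "b1 = b2"
proof (rule ccontr)
  assume ne: "b1 \<noteq> b2"
  obtain ps ws where W: "uwalk s t F ps ws" "distinct ws" "hd ws = b1" "last ws = b2"
    using conn rtrancl_urel_imp_simple_uwalk by (fastforce simp: uconn_urel)
  have len: "length ws = Suc (length ps)" and ps: "set ps \<subseteq> F" using W(1) by (auto simp: uwalk_def)
  then have "ws \<noteq> []" by auto
  then have "b1 \<in> set ws" "b2 \<in> set ws" using W(3,4) by auto
  have "s ` set ps \<subseteq> set ws - {b1, b2}"
  proof
    fix x assume "x \<in> s ` set ps"
    then obtain i where i: "i < length ps" "x = s (ps!i)" by (auto simp: in_set_conv_nth)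
    then have "x = ws!i \<or> x = ws!Suc i" using W(1) unfolding uwalk_def by auto
    moreover have "x \<notin> B" using src ps i by (auto dest: nth_mem)
    ultimately show "x \<in> set ws - {b1, b2}" using i len b by auto
  qed
  then have "card (s ` set ps) \<le> card (set ws - {b1, b2})"
    by (intro card_mono) auto
  also have "\<dots> = card (set ws) - 2"
    using \<open>b1 \<in> set ws\<close> \<open>b2 \<in> set ws\<close> ne by (simp add: card_Diff_subset)
  finally have "card (s ` set ps) \<le> card (set ws) - 2" .
  moreover have "card (s ` set ps) = length ps"
    using card_image[OF inj_on_subset[OF inj ps]] uwalk_distinct_edges[OF W(1,2)]
    by (simp add: distinct_card)
  moreover have "ps \<noteq> []" using len W(3,4) ne by (cases ws) auto
  ultimately show False using distinct_card[OF W(2)] len by (cases ps) auto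
qed

lemma rooted_forest_imp_Theta:
  assumes mg: "multidigraph m E s t" and BN: "B \<subseteq> {1..m+1}" and FE: "F \<subseteq> E"
    and inj: "inj_on s F" and src: "s ` F = {1..m+1} - B" and tf: "trapfree s t F"
  shows "F \<in> Theta m E s t B"
proof -
  let ?N = "{1..m+1}" let ?R = "uconn ?N s t F"
  have eq: "equiv ?N ?R" by (rule equiv_uconn)
  have ends: "\<forall>f\<in>F. s f \<in> ?N \<and> t f \<in> ?N" using mg FE unfolding multidigraph_def by blast
  have reach: "\<exists>b\<in>B. (n, b) \<in> ?R" if "n \<in> ?N" for n
    using trapfree_reaches_root[OF ends _ tf that] src by simp
  have "s ` F \<inter> B = {}" by (auto simp: src)
  then have unique: "b1 = b2" if "b1 \<in> B" "b2 \<in> B" "(b1, b2) \<in> ?R" for b1 b2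
    using connected_roots_eq[OF inj _ that] by simp
  have class_root: "\<exists>b\<in>B. C = ?R``{b}" if C: "C \<in> components ?N s t F" for C
  proof -
    obtain n where n: "C = ?R``{n}" "n \<in> ?N"
      using C unfolding components_def by (rule quotientE)
    then obtain b where "b \<in> B" "(n, b) \<in> ?R" using reach by blast
    then show ?thesis using n equiv_class_eq[OF eq] by metis
  qed
  have "bij_betw (\<lambda>b. ?R``{b}) B (components ?N s t F)"
    unfolding bij_betw_def
  proof
    show "inj_on (\<lambda>b. ?R``{b}) B"
      using unique eq_equiv_class[OF _ eq] BN by (intro inj_onI) blast
    show "(\<lambda>b. ?R``{b}) ` B = components ?N s t F"
      using class_root BN unfolding components_def by (auto intro: quotientI)
  qed
  then have card: "card (components ?N s t F) = card B" by (simp only: bij_betw_same_card)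
  have root: "\<forall>C\<in>components ?N s t F. \<exists>r\<in>B \<inter> C. \<forall>n\<in>C. (\<nexists>e. e \<in> F \<and> s e = n) \<longleftrightarrow> n = r"
  proof
    fix C assume "C \<in> components ?N s t F"
    then obtain b where b: "b \<in> B" "C = ?R``{b}" using class_root by blast
    have "(\<nexists>e. e \<in> F \<and> s e = x) \<longleftrightarrow> x = b" if "x \<in> C" for x
    proof -
      have bx: "(b, x) \<in> ?R" using that b(2) by simp
      then have "x \<in> ?N" by (simp add: uconn_urel)
      then have "x \<notin> s ` F \<longleftrightarrow> x \<in> B" by (simp add: src)
      moreover have "x \<in> B \<longleftrightarrow> x = b" using unique[OF b(1) _ bx] b(1) by blast
      ultimately show ?thesis by (auto simp: image_iff)
    qed
    moreover have "b \<in> C" unfolding b(2) using equiv_class_self[OF eq] BN b(1) by blast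
    ultimately show "\<exists>r\<in>B \<inter> C. \<forall>n\<in>C. (\<nexists>e. e \<in> F \<and> s e = n) \<longleftrightarrow> n = r" using b(1) by blast
  qed
  show ?thesis
    by (unfold Theta_def) (intro CollectI conjI FE inj_trapfree_imp_uacyclic[OF inj tf] card root)
qed

text \<open>Every component contains a root and there are exactly card B components, so the map
  sending a root to its component is injective.\<close>
lemma Theta_roots_unique:
  assumes BN: "B \<subseteq> {1..m+1}" and F: "F \<in> Theta m E s t B"
    and "b1 \<in> B" "b2 \<in> B" "(b1, b2) \<in> uconn {1..m+1} s t F"
  shows "b1 = b2"
proof -
  let ?N = "{1..m+1}" let ?R = "uconn ?N s t F"
  have eq: "equiv ?N ?R" by (rule equiv_uconn)
  have card: "card (components ?N s t F) = card B"
    and root: "\<forall>C\<in>components ?N s t F. B \<inter> C \<noteq> {}"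
    using F unfolding Theta_def by auto
  have classes: "(\<lambda>b. ?R``{b}) ` B = components ?N s t F"
  proof
    show "(\<lambda>b. ?R``{b}) ` B \<subseteq> components ?N s t F"
      using BN unfolding components_def by (auto intro: quotientI)
    show "components ?N s t F \<subseteq> (\<lambda>b. ?R``{b}) ` B"
    proof
      fix C assume C: "C \<in> components ?N s t F"
      then obtain n where n: "n \<in> ?N" "C = ?R``{n}"
        unfolding components_def by (blast elim: quotientE)
      obtain r where "r \<in> B" "r \<in> C" using root C by blast
      then show "C \<in> (\<lambda>b. ?R``{b}) ` B" using n equiv_class_eq_iff[OF eq] by auto
    qed
  qed
  have "inj_on (\<lambda>b. ?R``{b}) B"
    using finite_subset[OF BN finite_atLeastAtMost]
    by (rule eq_card_imp_inj_on) (simp only: classes card)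
  then show ?thesis using assms(3-5) equiv_class_eq_iff[OF eq] unfolding inj_on_def by blast
qed

lemma Theta_source_image:
  assumes mg: "multidigraph m E s t" and BN: "B \<subseteq> {1..m+1}" and F: "F \<in> Theta m E s t B"
  shows "s ` F = {1..m+1} - B"
proof -
  let ?N = "{1..m+1}" let ?R = "uconn ?N s t F"
  have eq: "equiv ?N ?R" by (rule equiv_uconn)
  have FE: "F \<subseteq> E"
    and root: "\<forall>C\<in>components ?N s t F. \<exists>r\<in>B \<inter> C. \<forall>x\<in>C. (\<nexists>e. e \<in> F \<and> s e = x) \<longleftrightarrow> x = r"
    using F unfolding Theta_def by blast+
  have sub: "s ` F \<subseteq> ?N" using mg FE unfolding multidigraph_def by auto
  have iff: "n \<in> s ` F \<longleftrightarrow> n \<notin> B" if n: "n \<in> ?N" for n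
  proof -
    have "?R``{n} \<in> components ?N s t F" using n unfolding components_def by (rule quotientI)
    then obtain r where r: "r \<in> B" "(n, r) \<in> ?R"
      and root: "\<forall>x\<in>?R``{n}. (\<nexists>e. e \<in> F \<and> s e = x) \<longleftrightarrow> x = r"
      using root by auto
    have "n \<in> ?R``{n}" using eq n by (rule equiv_class_self)
    then have "n \<in> s ` F \<longleftrightarrow> n \<noteq> r" using root by blast
    also have "\<dots> \<longleftrightarrow> n \<notin> B" using Theta_roots_unique[OF BN F _ r] r(1) by blast
    finally show ?thesis .
  qed
  show ?thesis
  proof (intro set_eqI iffI)
    fix n assume "n \<in> s ` F" then show "n \<in> ?N - B" using sub iff by blast
  next
    fix n assume "n \<in> ?N - B" then show "n \<in> s ` F" using iff by blast
  qed
qed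

text \<open>If two edges a and b left the same node, deleting b would keep every non-root node an
  edge source; both ends of b would then reach roots without b, and these roots coincide, so b
  would close an undirected cycle.\<close>
lemma Theta_inj_on_source:
  assumes mg: "multidigraph m E s t" and BN: "B \<subseteq> {1..m+1}" and F: "F \<in> Theta m E s t B"
  shows "inj_on s F"
proof (rule inj_onI, rule ccontr)
  let ?N = "{1..m+1}"
  fix a b assume ab: "a \<in> F" "b \<in> F" "s a = s b" "a \<noteq> b"
  have FE: "F \<subseteq> E" and ua: "uacyclic s t F" using F unfolding Theta_def by blast+
  have ends: "\<forall>f\<in>F. s f \<in> ?N \<and> t f \<in> ?N" using mg FE unfolding multidigraph_def by blast
  have "finite F" using mg FE finite_subset unfolding multidigraph_def by blast
  let ?F0 = "F - {b}"
  have ends0: "\<forall>f\<in>?F0. s f \<in> ?N \<and> t f \<in> ?N" using ends by blast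
  have "s b \<in> s ` ?F0" using ab(1,3,4) by (metis DiffI image_eqI singletonD)
  then have "s ` ?F0 = s ` F" using ab(2) by (metis image_insert insert_Diff insert_absorb)
  then have src0: "?N - B \<subseteq> s ` ?F0" using Theta_source_image[OF mg BN F] by simp
  have tf0: "trapfree s t ?F0"
    using uacyclic_imp_trapfree[OF \<open>finite F\<close> ua] by (rule trapfree_subset[rotated]) blast
  obtain \<beta>1 \<beta>2 where \<beta>: "\<beta>1 \<in> B" "(s b, \<beta>1) \<in> uconn ?N s t ?F0"
      "\<beta>2 \<in> B" "(t b, \<beta>2) \<in> uconn ?N s t ?F0"
    using trapfree_reaches_root[OF ends0 src0 tf0] ends ab(2) by meson
  have R0_R: "uconn ?N s t ?F0 \<subseteq> uconn ?N s t F" by (rule uconn_mono) blast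
  have "(s b, t b) \<in> uconn ?N s t F" using ab(2) ends by (intro edge_in_uconn) auto
  then have "(\<beta>1, \<beta>2) \<in> uconn ?N s t F"
    using \<beta>(2,4) R0_R by (meson subsetD uconn_sym uconn_trans)
  then have "\<beta>1 = \<beta>2" using Theta_roots_unique[OF BN F] \<beta>(1,3) by blast
  then have "(t b, s b) \<in> uconn ?N s t ?F0"
    using \<beta>(2,4) by (meson uconn_sym uconn_trans)
  then show False
    using uacyclic_edge_ends_disconnected[OF ua ab(2)] by (simp add: uconn_urel)
qed

lemma Theta_iff:
  assumes mg: "multidigraph m E s t" and BN: "B \<subseteq> {1..m+1}"
  shows "F \<in> Theta m E s t B \<longleftrightarrow>
    F \<subseteq> E \<and> inj_on s F \<and> s ` F = {1..m+1} - B \<and> trapfree s t F"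
proof
  assume F: "F \<in> Theta m E s t B"
  then have FE: "F \<subseteq> E" and "uacyclic s t F" unfolding Theta_def by blast+
  moreover have "finite F" using mg FE finite_subset unfolding multidigraph_def by blast
  ultimately show "F \<subseteq> E \<and> inj_on s F \<and> s ` F = {1..m+1} - B \<and> trapfree s t F"
    using Theta_inj_on_source[OF mg BN F] Theta_source_image[OF mg BN F] uacyclic_imp_trapfree
    by simp
qed (use rooted_forest_imp_Theta[OF mg BN] in blast)

lemma inj_on_exchange:
  assumes inj: "inj_on s F" and "e \<in> F" "s e' = s e"
  shows "inj_on s ((F - {e}) \<union> {e'})"
proof -
  have "s e' \<notin> s ` (F - {e})"
  proof
    assume "s e' \<in> s ` (F - {e})"
    then obtain f where f: "f \<in> F - {e}" "s e' = s f" by (auto elim: imageE)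
    then have "s f = s e" using assms(3) by simp
    then have "f = e" using f(1) assms(2) inj_onD[OF inj] by blast
    then show False using f(1) by simp
  qed
  then have "s e' \<notin> s ` (F - {e} - {e'})" by blast
  moreover have "inj_on s (F - {e})" using inj by (rule inj_on_diff)
  ultimately show ?thesis by simp
qed

lemma image_exchange:
  assumes "e \<in> F" "s e' = s e"
  shows "s ` ((F - {e}) \<union> {e'}) = s ` F"
proof -
  have "s ` F = insert (s e) (s ` (F - {e}))" using assms(1) by (metis image_insert insert_Diff)
  then show ?thesis using assms(2) by simp
qed

text \<open>A trap of the new edge set contains a directed cycle; the sources of its nodes form a
  trap of F as well, because if the cycle uses e' then it passes through t e, so e can take
  over the role of e'.\<close>
lemma trapfree_exchange:
  assumes "finite F" "trapfree s t F" "e \<in> F" "s e' = s e"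
    and cyc: "\<forall>es. dcycle ((F - {e}) \<union> {e'}) s t es \<and> e' \<in> set es \<longrightarrow> t e \<in> s ` set es"
  shows "trapfree s t ((F - {e}) \<union> {e'})"
  unfolding trapfree_def
proof
  let ?F' = "(F - {e}) \<union> {e'}"
  assume "\<exists>S. trap s t ?F' S"
  then obtain es where es: "dcycle ?F' s t es"
    using trap_imp_dcycle[of ?F'] assms(1) by blast
  have "trap s t F (s ` set es)"
    unfolding trap_def
  proof (intro conjI ballI)
    show "s ` set es \<noteq> {}" using es unfolding dcycle_def by simp
    fix x assume "x \<in> s ` set es"
    then obtain f where f: "x = s f" "f \<in> set es" by (rule imageE)
    show "\<exists>f\<in>F. s f = x \<and> t f \<in> s ` set es"
    proof (cases "f = e'")
      case True
      then have "t e \<in> s ` set es" using cyc es f(2) by blast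
      moreover have "s e = x" using f(1) True assms(4) by simp
      ultimately show ?thesis using assms(3) by blast
    next
      case False
      then have "f \<in> F" using es f(2) unfolding dcycle_def by auto
      then show ?thesis using f dcycle_target_in_sources[OF es f(2)] by auto
    qed
  qed
  then show False using assms(2) unfolding trapfree_def by blast
qed

lemma edge_partition_exchange_edge:
  assumes "edge_partition m E s t \<pi> \<mu>" "e \<in> Eneg E \<pi>" "e' \<in> \<mu> e"
  shows "e' \<in> E" "s e' = s e" "\<forall>es. dcycle E s t es \<and> e' \<in> set es \<longrightarrow> t e \<in> s ` set es"
proof -
  have "\<forall>e\<in>Eneg E \<pi>. \<mu> e \<subseteq> Epos E \<pi> \<and> (\<forall>e'\<in>\<mu> e. s e' = s e) \<and>
      (\<forall>e'\<in>\<mu> e. \<forall>es. dcycle E s t es \<and> e' \<in> set es \<longrightarrow> t e \<in> s ` set es) \<and>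
      (\<forall>e''\<in>Eneg E \<pi>. e'' \<noteq> e \<longrightarrow> \<mu> e \<inter> \<mu> e'' = {})"
    using assms(1) unfolding edge_partition_def by (elim conjE)
  then have "\<mu> e \<subseteq> Epos E \<pi>" "\<forall>e'\<in>\<mu> e. s e' = s e"
    "\<forall>e'\<in>\<mu> e. \<forall>es. dcycle E s t es \<and> e' \<in> set es \<longrightarrow> t e \<in> s ` set es"
    using assms(2) by simp_all
  then show "e' \<in> E" "s e' = s e" "\<forall>es. dcycle E s t es \<and> e' \<in> set es \<longrightarrow> t e \<in> s ` set es"
    using assms(3) unfolding Epos_def by auto
qed

theorem lemma3p4:
  fixes m :: nat and E :: "'e set" and s t :: "'e \<Rightarrow> nat"
    and \<pi> :: "'e \<Rightarrow> 'r::ordered_ring" and \<mu> :: "'e \<Rightarrow> 'e set"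
    and B :: "nat set" and \<zeta> :: "'e set" and e e' :: 'e
  assumes "edge_partition m E s t \<pi> \<mu>"
    and "B \<subseteq> {1..m+1}"
    and "\<zeta> \<in> Theta m E s t B"
    and "e \<in> \<zeta> \<inter> Eneg E \<pi>"
    and "e' \<in> \<mu> e"
  shows "(\<zeta> - {e}) \<union> {e'} \<in> Theta m E s t B"
proof -
  let ?F = "(\<zeta> - {e}) \<union> {e'}"
  have mg: "multidigraph m E s t" using assms(1) unfolding edge_partition_def by (rule conjunct1)
  have "e \<in> \<zeta>" "e \<in> Eneg E \<pi>" using assms(4) by simp_all
  note e' = edge_partition_exchange_edge[OF assms(1) \<open>e \<in> Eneg E \<pi>\<close> assms(5)]
  have "\<zeta> \<subseteq> E \<and> inj_on s \<zeta> \<and> s ` \<zeta> = {1..m+1} - B \<and> trapfree s t \<zeta>"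
    using Theta_iff[OF mg assms(2)] assms(3) by (rule iffD1)
  then have \<zeta>: "\<zeta> \<subseteq> E" "inj_on s \<zeta>" "s ` \<zeta> = {1..m+1} - B" "trapfree s t \<zeta>" by simp_all
  have "finite \<zeta>" using mg \<zeta>(1) unfolding multidigraph_def by (auto intro: finite_subset)
  have "?F \<subseteq> E" using \<zeta>(1) e'(1) by auto
  then have "\<forall>es. dcycle ?F s t es \<and> e' \<in> set es \<longrightarrow> t e \<in> s ` set es"
    using e'(3) dcycle_mono[OF _ \<open>?F \<subseteq> E\<close>] by blast
  then have "trapfree s t ?F" by (rule trapfree_exchange[OF \<open>finite \<zeta>\<close> \<zeta>(4) \<open>e \<in> \<zeta>\<close> e'(2)])
  moreover have "inj_on s ?F" by (rule inj_on_exchange[OF \<zeta>(2) \<open>e \<in> \<zeta>\<close> e'(2)])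
  moreover have "s ` ?F = {1..m+1} - B" using image_exchange[OF \<open>e \<in> \<zeta>\<close> e'(2)] \<zeta>(3) by simp
  ultimately show ?thesis using Theta_iff[OF mg assms(2)] \<open>?F \<subseteq> E\<close> by simp
qed

end
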